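(* Let $\mathbb{V}$ be a finitary variety of algebras which has 2-fold subobject decompositions over the countably infinite set $\mathbb{N}$. Then $\mathbb{V}$ is trivial, i.e. every algebra in $\mathbb{V}$ has at most one element.
   Context: A variety of algebras (as a category, it is regular) has 2-fold subobject decompositions over $\mathbb{N}$ if for every family $(A_n)_{n\in\mathbb{N}}$ of algebras in $\mathbb{V}$ and any two subalgebras $S,T$ of $\prod_{n\in\mathbb{N}}A_n$: if for all $i\neq j$ in $\mathbb{N}$ the images of $S$ and $T$ under the projection $\prod_n A_n\to A_i\times A_j$ coincide, then $S=T$. Finitary means all basic operations have finite arity. *)

theory Defs
  imports Main
begin

text \<open>Finitary signatures: operation symbols of type 'f with arity map ar :: 'f => nat.\<close>

datatype ('f,'v) trm = Var 'v | Op 'f "('f,'v) trm list"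

type_synonym ('f,'c) alg = "'c set \<times> ('f \<Rightarrow> 'c list \<Rightarrow> 'c)"

definition is_alg :: "('f \<Rightarrow> nat) \<Rightarrow> ('f,'c) alg \<Rightarrow> bool" where
  "is_alg ar A \<longleftrightarrow>
     (\<forall>f xs. length xs = ar f \<longrightarrow> set xs \<subseteq> fst A \<longrightarrow> snd A f xs \<in> fst A)"

fun eval :: "('f \<Rightarrow> 'c list \<Rightarrow> 'c) \<Rightarrow> ('v \<Rightarrow> 'c) \<Rightarrow> ('f,'v) trm \<Rightarrow> 'c" where
  "eval I \<sigma> (Var v) = \<sigma> v"
| "eval I \<sigma> (Op f ts) = I f (map (eval I \<sigma>) ts)"

fun wf_trm :: "('f \<Rightarrow> nat) \<Rightarrow> ('f,'v) trm \<Rightarrow> bool" where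
  "wf_trm ar (Var v) = True"
| "wf_trm ar (Op f ts) = (length ts = ar f \<and> (\<forall>t\<in>set ts. wf_trm ar t))"

definition is_eq_theory :: "('f \<Rightarrow> nat) \<Rightarrow> (('f,nat) trm \<times> ('f,nat) trm) set \<Rightarrow> bool" where
  "is_eq_theory ar E \<longleftrightarrow> (\<forall>(s,t)\<in>E. wf_trm ar s \<and> wf_trm ar t)"

definition satisfies :: "('f,'c) alg \<Rightarrow> (('f,nat) trm \<times> ('f,nat) trm) set \<Rightarrow> bool" where
  "satisfies A E \<longleftrightarrow>
     (\<forall>(s,t)\<in>E. \<forall>\<sigma>. (\<forall>v. \<sigma> v \<in> fst A) \<longrightarrow> eval (snd A) \<sigma> s = eval (snd A) \<sigma> t)"

definition in_variety :: "('f \<Rightarrow> nat) \<Rightarrow> (('f,nat) trm \<times> ('f,nat) trm) set \<Rightarrow> ('f,'c) alg \<Rightarrow> bool" where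
  "in_variety ar E A \<longleftrightarrow> is_alg ar A \<and> satisfies A E"

definition prod_alg :: "(nat \<Rightarrow> ('f,'c) alg) \<Rightarrow> ('f, nat \<Rightarrow> 'c) alg" where
  "prod_alg A = ({x. \<forall>n. x n \<in> fst (A n)}, (\<lambda>f xs n. snd (A n) f (map (\<lambda>x. x n) xs)))"

definition subalgebra :: "('f \<Rightarrow> nat) \<Rightarrow> 'c set \<Rightarrow> ('f,'c) alg \<Rightarrow> bool" where
  "subalgebra ar S B \<longleftrightarrow> S \<subseteq> fst B \<and>
     (\<forall>f xs. length xs = ar f \<longrightarrow> set xs \<subseteq> S \<longrightarrow> snd B f xs \<in> S)"

definition two_fold_decomp ::
  "('f \<Rightarrow> nat) \<Rightarrow> (('f,nat) trm \<times> ('f,nat) trm) set \<Rightarrow> 'c itself \<Rightarrow> bool" where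
  "two_fold_decomp ar E _ \<longleftrightarrow>
     (\<forall>A :: nat \<Rightarrow> ('f,'c) alg. (\<forall>n. in_variety ar E (A n)) \<longrightarrow>
        (\<forall>S T. subalgebra ar S (prod_alg A) \<longrightarrow> subalgebra ar T (prod_alg A) \<longrightarrow>
           (\<forall>i j. i \<noteq> j \<longrightarrow> (\<lambda>x. (x i, x j)) ` S = (\<lambda>x. (x i, x j)) ` T) \<longrightarrow> S = T))"

end

theory Submission
  imports Defs
begin

text \<open>In the countable power \<open>A\<^sup>\<nat>\<close> the eventually constant sequences form a subalgebra,
  because every operation is finitary, so finitely many eventually constant arguments are
  simultaneously constant from some index on. This subalgebra has the same image as \<open>A\<^sup>\<nat>\<close>
  under every projection to two distinct coordinates \<open>i \<noteq> j\<close>: a pair \<open>(u, v)\<close> is realised by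
  the sequence that is \<open>v\<close> at \<open>j\<close> and \<open>u\<close> everywhere else. Two-fold decompositions therefore
  force every sequence to be eventually constant, which fails for an alternating sequence as
  soon as \<open>A\<close> has two distinct elements.\<close>

definition eventually_const_seqs :: "'c set \<Rightarrow> (nat \<Rightarrow> 'c) set" where
  "eventually_const_seqs C =
     {x. (\<forall>n. x n \<in> C) \<and> (\<exists>c. \<forall>\<^sub>F n in sequentially. x n = c)}"

lemma subalgebra_carrier_iff_is_alg: "subalgebra ar (fst B) B \<longleftrightarrow> is_alg ar B"
  by (simp add: subalgebra_def is_alg_def)

lemma is_alg_prod_alg:
  assumes "\<And>n. is_alg ar (A n)"
  shows "is_alg ar (prod_alg A)"
  unfolding is_alg_def
proof (intro allI impI)
  fix f xs
  assume len: "length xs = ar f" and xs: "set xs \<subseteq> fst (prod_alg A)"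
  have "snd (A n) f (map (\<lambda>x. x n) xs) \<in> fst (A n)" for n
  proof -
    have "set (map (\<lambda>x. x n) xs) \<subseteq> fst (A n)"
      using xs by (auto simp: prod_alg_def)
    with assms[of n] len show ?thesis
      by (simp add: is_alg_def)
  qed
  then show "snd (prod_alg A) f xs \<in> fst (prod_alg A)"
    by (simp add: prod_alg_def)
qed

lemma subalgebra_eventually_const_seqs:
  assumes "is_alg ar A"
  shows "subalgebra ar (eventually_const_seqs (fst A)) (prod_alg (\<lambda>_. A))"
  unfolding subalgebra_def
proof (intro conjI allI impI)
  show "eventually_const_seqs (fst A) \<subseteq> fst (prod_alg (\<lambda>_. A))"
    by (auto simp: eventually_const_seqs_def prod_alg_def)
next
  fix f xs
  assume len: "length xs = ar f" and xs: "set xs \<subseteq> eventually_const_seqs (fst A)"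
  have "\<exists>c. \<forall>\<^sub>F n in sequentially. x n = c" if "x \<in> set xs" for x
    using that xs by (auto simp: eventually_const_seqs_def)
  then obtain c where "\<And>x. x \<in> set xs \<Longrightarrow> \<forall>\<^sub>F n in sequentially. x n = c x"
    by metis
  then have "\<forall>\<^sub>F n in sequentially. \<forall>x\<in>set xs. x n = c x"
    by (simp add: eventually_ball_finite)
  then have const: "\<forall>\<^sub>F n in sequentially. snd A f (map (\<lambda>x. x n) xs) = snd A f (map c xs)"
    by (rule eventually_mono) (simp cong: map_cong)
  have "snd A f (map (\<lambda>x. x n) xs) \<in> fst A" for n
  proof -
    have "set (map (\<lambda>x. x n) xs) \<subseteq> fst A"
      using xs by (auto simp: eventually_const_seqs_def)
    with assms len show ?thesis
      by (simp add: is_alg_def)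
  qed
  with const show "snd (prod_alg (\<lambda>_. A)) f xs \<in> eventually_const_seqs (fst A)"
    by (auto simp: eventually_const_seqs_def prod_alg_def)
qed

lemma pair_image_eventually_const_seqs:
  assumes "i \<noteq> j"
  shows "(\<lambda>x. (x i, x j)) ` eventually_const_seqs C = (\<lambda>x. (x i, x j)) ` {x. \<forall>n. x n \<in> C}"
proof
  show "(\<lambda>x. (x i, x j)) ` eventually_const_seqs C \<subseteq> (\<lambda>x. (x i, x j)) ` {x. \<forall>n. x n \<in> C}"
    by (auto simp: eventually_const_seqs_def)
next
  show "(\<lambda>x. (x i, x j)) ` {x. \<forall>n. x n \<in> C} \<subseteq> (\<lambda>x. (x i, x j)) ` eventually_const_seqs C"
  proof clarify
    fix x :: "nat \<Rightarrow> 'a" assume x: "\<forall>n. x n \<in> C"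
    define y where "y = (\<lambda>n. if n = j then x j else x i)"
    have "\<forall>\<^sub>F n in sequentially. y n = x i"
      unfolding eventually_sequentially y_def by (rule exI[of _ "Suc j"]) simp
    moreover have "\<forall>n. y n \<in> C"
      using x by (simp add: y_def)
    ultimately have "y \<in> eventually_const_seqs C"
      by (auto simp: eventually_const_seqs_def)
    moreover have "(x i, x j) = (y i, y j)"
      using assms by (simp add: y_def)
    ultimately show "(x i, x j) \<in> (\<lambda>x. (x i, x j)) ` eventually_const_seqs C"
      by blast
  qed
qed

lemma alternating_not_eventually_const:
  assumes "a \<noteq> b"
  shows "(\<lambda>n. if even n then a else b) \<notin> eventually_const_seqs C"
proof
  assume "(\<lambda>n. if even n then a else b) \<in> eventually_const_seqs C"
  then obtain c and N :: nat where "\<forall>n\<ge>N. (if even n then a else b) = c"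
    unfolding eventually_const_seqs_def eventually_sequentially by blast
  then have "(if even N then a else b) = (if even (Suc N) then a else b)"
    by (metis le_Suc_eq order_refl)
  with assms show False
    by (auto split: if_splits)
qed

theorem proposition4p9:
  fixes ar :: "'f \<Rightarrow> nat" and E :: "(('f,nat) trm \<times> ('f,nat) trm) set"
  assumes "is_eq_theory ar E"
    and "two_fold_decomp ar E TYPE('c)"
  shows "\<forall>A :: ('f,'c) alg. in_variety ar E A \<longrightarrow> (\<forall>x\<in>fst A. \<forall>y\<in>fst A. x = y)"
proof (intro allI impI ballI, rule ccontr)
  fix A :: "('f,'c) alg" and a b
  assume V: "in_variety ar E A" and a: "a \<in> fst A" and b: "b \<in> fst A" and "a \<noteq> b"
  then have alg: "is_alg ar A"
    by (simp add: in_variety_def)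
  have carrier: "fst (prod_alg (\<lambda>_. A)) = {x. \<forall>n. x n \<in> fst A}"
    by (simp add: prod_alg_def)
  have decomp: "\<forall>S T. subalgebra ar S (prod_alg (\<lambda>_. A)) \<longrightarrow> subalgebra ar T (prod_alg (\<lambda>_. A)) \<longrightarrow>
      (\<forall>i j. i \<noteq> j \<longrightarrow> (\<lambda>x. (x i, x j)) ` S = (\<lambda>x. (x i, x j)) ` T) \<longrightarrow> S = T"
    using spec[OF assms(2)[unfolded two_fold_decomp_def], of "\<lambda>_. A"] V by simp
  have "eventually_const_seqs (fst A) = fst (prod_alg (\<lambda>_. A))"
    using decomp[rule_format, OF subalgebra_eventually_const_seqs[OF alg]
        subalgebra_carrier_iff_is_alg[THEN iffD2, OF is_alg_prod_alg[OF alg]]]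
      pair_image_eventually_const_seqs[of _ _ "fst A"]
    unfolding carrier by simp
  moreover have "(\<lambda>n. if even n then a else b) \<in> fst (prod_alg (\<lambda>_. A))"
    using a b by (simp add: carrier)
  ultimately show False
    using alternating_not_eventually_const[OF \<open>a \<noteq> b\<close>] by metis
qed

end
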